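(* Let $c_{db}$ be large enough (depending only on $s,d$) so that the following holds: for any chain $Q_0\supset Q_1\supset\dots\supset Q_n$ in $\mathcal D$ with $Q_j$ a child of $Q_{j-1}$ and $Q_j$ not $p$-doubling for $1\le j\le n$, one has $\Theta(Q_j)\le 2^{-j/2}p(Q_0)$ for all $j$. Fix $Q\in\mathcal D$ and let $J\subset\mathcal D$ be a family of cubes contained in $Q$ such that for every $P\in J$, every cube $P'\in\mathcal D$ with $P\subset P'\subset Q$ is not $p$-doubling. Then $$\sigma(J)\le 2\,p(Q)^2\,\mu(Q).$$
   Context: $0<s<d$. $E\subset\mathbb R^d$ is a Cantor set built from a compact $Q^0$ by repeatedly choosing, inside each closed "cube" $Q$ of generation $k$, a finite nonempty family of closed children (the cubes of generation $k+1$), such that each child $Q'$ of $Q$ satisfies $\frac18\ell(Q)\le\ell(Q')\le\frac13\ell(Q)$, where $\ell(Q)=\operatorname{diam}(Q)$, and distinct children of $Q$ are at distance $\ge c_{sep}\ell(Q)$. $\mathcal D$ is the family of all such cubes. $\mu$ is a finite Borel measure supported on $E$ with $\mu(Q)>0$ for all $Q\in\mathcal D$. $\Theta(Q)=\mu(Q)/\ell(Q)^s$, $p(Q)=\sum_{P\in\mathcal D,\,P\supset Q}\frac{\ell(Q)}{\ell(P)}\Theta(P)$, $Q$ is $p$-doubling (with constant $c_{db}$) if $p(Q)\le c_{db}\Theta(Q)$, and for $\mathcal A\subset\mathcal D$, $\sigma(\mathcal A)=\sum_{P\in\mathcal A}\Theta(P)^2\mu(P)$. *)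

theory Defs
  imports "HOL-Analysis.Analysis"
begin

text \<open>Cubes of generation k, built from the initial compact set Q0 by the
  children map ch (ch Q = the finite family of children of the cube Q).\<close>
primrec gen :: "'a set \<Rightarrow> ('a set \<Rightarrow> 'a set set) \<Rightarrow> nat \<Rightarrow> 'a set set" where
  "gen Q0 ch 0 = {Q0}"
| "gen Q0 ch (Suc k) = \<Union> (ch ` gen Q0 ch k)"

definition cubes :: "'a set \<Rightarrow> ('a set \<Rightarrow> 'a set set) \<Rightarrow> 'a set set" where
  "cubes Q0 ch = (\<Union>k. gen Q0 ch k)"

definition cantor_set :: "'a set \<Rightarrow> ('a set \<Rightarrow> 'a set set) \<Rightarrow> 'a set" where
  "cantor_set Q0 ch = (\<Inter>k. \<Union> (gen Q0 ch k))"

text \<open>The standing assumptions on the construction; l(Q) = diameter Q.\<close>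
definition cantor_construction ::
  "('a::euclidean_space) set \<Rightarrow> ('a set \<Rightarrow> 'a set set) \<Rightarrow> real \<Rightarrow> bool" where
  "cantor_construction Q0 ch c_sep \<longleftrightarrow>
     compact Q0 \<and> diameter Q0 > 0 \<and> c_sep > 0 \<and>
     (\<forall>Q\<in>cubes Q0 ch.
        finite (ch Q) \<and> ch Q \<noteq> {} \<and>
        (\<forall>Q'\<in>ch Q. closed Q' \<and> Q' \<subseteq> Q \<and>
            diameter Q / 8 \<le> diameter Q' \<and> diameter Q' \<le> diameter Q / 3) \<and>
        (\<forall>Q1\<in>ch Q. \<forall>Q2\<in>ch Q. Q1 \<noteq> Q2 \<longrightarrow> setdist Q1 Q2 \<ge> c_sep * diameter Q))"

definition Theta :: "'a::euclidean_space measure \<Rightarrow> real \<Rightarrow> 'a set \<Rightarrow> real" where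
  "Theta \<mu> s Q = measure \<mu> Q / diameter Q powr s"

definition pcoef ::
  "'a::euclidean_space set \<Rightarrow> ('a set \<Rightarrow> 'a set set) \<Rightarrow> 'a measure \<Rightarrow> real \<Rightarrow> 'a set \<Rightarrow> real" where
  "pcoef Q0 ch \<mu> s Q = (\<Sum>P\<in>{P\<in>cubes Q0 ch. Q \<subseteq> P}. diameter Q / diameter P * Theta \<mu> s P)"

definition p_doubling ::
  "'a::euclidean_space set \<Rightarrow> ('a set \<Rightarrow> 'a set set) \<Rightarrow> 'a measure \<Rightarrow> real \<Rightarrow> real \<Rightarrow> 'a set \<Rightarrow> bool" where
  "p_doubling Q0 ch \<mu> s c_db Q \<longleftrightarrow> pcoef Q0 ch \<mu> s Q \<le> c_db * Theta \<mu> s Q"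

text \<open>sigma(A) = sum over P in A of Theta(P)^2 mu(P) (possibly infinite family,
  so an unordered sum of nonnegative terms in ennreal).\<close>
definition sigma :: "'a::euclidean_space measure \<Rightarrow> real \<Rightarrow> 'a set set \<Rightarrow> ennreal" where
  "sigma \<mu> s A = (\<Sum>\<^sub>\<infinity>P\<in>A. ennreal ((Theta \<mu> s P)\<^sup>2 * measure \<mu> P))"

end

theory Submission imports Defs begin

text \<open>A cube P of J lies some n generations below Q, and every cube on the chain of
  ancestors leading from Q down to P is not p-doubling, so the chain hypothesis gives
  \<open>\<Theta>(P)\<^sup>2 \<le> 2\<^sup>-\<^sup>n p(Q)\<^sup>2\<close>. The cubes of a fixed generation are pairwise disjoint,
  so the cubes of J at depth n have total measure at most \<open>\<mu>(Q)\<close>; summing the geometric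
  series over n gives the factor 2.\<close>

lemma gen_subset_cubes: "gen Q0 ch k \<subseteq> cubes Q0 ch"
  unfolding cubes_def by blast

lemma cantor_child:
  assumes "cantor_construction Q0 ch c" "A \<in> cubes Q0 ch" "Q \<in> ch A"
  shows "closed Q" "Q \<subseteq> A" "diameter A / 8 \<le> diameter Q" "diameter Q \<le> diameter A / 3"
  using assms unfolding cantor_construction_def by blast+

lemma gen_cube:
  assumes cc: "cantor_construction Q0 ch c" and Q: "Q \<in> gen Q0 ch k"
  shows "closed Q" "bounded Q" "diameter Q > 0"
proof -
  have "closed Q \<and> Q \<subseteq> Q0 \<and> diameter Q > 0" using Q
  proof (induction k arbitrary: Q)
    case 0
    then show ?case using cc unfolding cantor_construction_def by (auto intro: compact_imp_closed)
  next
    case (Suc k)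
    then obtain A where A: "A \<in> gen Q0 ch k" "Q \<in> ch A" by auto
    with gen_subset_cubes have "A \<in> cubes Q0 ch" by blast
    from cantor_child[OF cc this A(2)] Suc.IH[OF A(1)] show ?case by auto
  qed
  moreover have "bounded Q0" using cc unfolding cantor_construction_def by (simp add: compact_imp_bounded)
  ultimately show "closed Q" "bounded Q" "diameter Q > 0" using bounded_subset by blast+
qed

text \<open>Siblings are disjoint because they are at positive distance.\<close>
lemma gen_disjoint:
  assumes cc: "cantor_construction Q0 ch c"
  shows "A \<in> gen Q0 ch k \<Longrightarrow> B \<in> gen Q0 ch k \<Longrightarrow> A \<noteq> B \<Longrightarrow> A \<inter> B = {}"
proof (induction k arbitrary: A B)
  case 0
  then show ?case by simp
next
  case (Suc k)
  then obtain A' B' where A: "A' \<in> gen Q0 ch k" "A \<in> ch A'" and B: "B' \<in> gen Q0 ch k" "B \<in> ch B'"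
    by auto
  have A'_cube: "A' \<in> cubes Q0 ch" and B'_cube: "B' \<in> cubes Q0 ch"
    using A(1) B(1) gen_subset_cubes by blast+
  show ?case
  proof (cases "A' = B'")
    case True
    have "c * diameter A' \<le> setdist A B"
      using cc A'_cube A(2) B(2) True Suc.prems(3) unfolding cantor_construction_def by blast
    moreover have "0 < c * diameter A'"
      using cc gen_cube(3)[OF cc A(1)] unfolding cantor_construction_def by simp
    ultimately show ?thesis using setdist_le_dist[of _ A _ B] by force
  next
    case False
    with Suc.IH[OF A(1) B(1)] cantor_child(2)[OF cc A'_cube A(2)] cantor_child(2)[OF cc B'_cube B(2)]
    show ?thesis by blast
  qed
qed

lemma gen_ancestor_chain:
  "P \<in> gen Q0 ch (k + n) \<Longrightarrow> \<exists>Qs. Qs n = P \<and> (\<forall>j\<le>n. Qs j \<in> gen Q0 ch (k + j))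
     \<and> (\<forall>j\<in>{1..n}. Qs j \<in> ch (Qs (j - 1)))"
proof (induction n arbitrary: P)
  case 0
  then show ?case by (intro exI[of _ "\<lambda>_. P"]) auto
next
  case (Suc n)
  then obtain A where A: "A \<in> gen Q0 ch (k + n)" "P \<in> ch A" by auto
  from Suc.IH[OF A(1)] obtain Qs where
    "Qs n = A" "\<forall>j\<le>n. Qs j \<in> gen Q0 ch (k + j)" "\<forall>j\<in>{1..n}. Qs j \<in> ch (Qs (j - 1))"
    by blast
  with Suc.prems A(2) show ?case
    by (intro exI[of _ "Qs(Suc n := P)"]) (auto simp: le_Suc_eq)
qed

lemma child_chain_antimono:
  fixes Qs :: "nat \<Rightarrow> 'a::euclidean_space set"
  assumes cc: "cantor_construction Q0 ch c"
    and cubes: "\<forall>j\<le>n. Qs j \<in> cubes Q0 ch" and child: "\<forall>j\<in>{1..n}. Qs j \<in> ch (Qs (j - 1))"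
    and "i \<le> j" "j \<le> n"
  shows "Qs j \<subseteq> Qs i"
  using \<open>i \<le> j\<close> \<open>j \<le> n\<close>
proof (induction j rule: dec_induct)
  case (step j)
  then have "Qs (Suc j) \<subseteq> Qs j"
    using cantor_child(2)[OF cc] cubes child by (metis Suc_leD atLeastAtMost_iff diff_Suc_1 le_add1 plus_1_eq_Suc)
  with step show ?case by simp
qed simp

lemma gen_ancestor:
  assumes cc: "cantor_construction Q0 ch c" and P: "P \<in> gen Q0 ch (k + n)"
  shows "\<exists>A\<in>gen Q0 ch k. P \<subseteq> A"
proof -
  obtain Qs where Qs: "Qs n = P" "\<forall>j\<le>n. Qs j \<in> gen Q0 ch (k + j)" "\<forall>j\<in>{1..n}. Qs j \<in> ch (Qs (j - 1))"
    using gen_ancestor_chain[OF P] by blast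
  then have "Qs n \<subseteq> Qs 0" using gen_subset_cubes by (intro child_chain_antimono[OF cc]) blast+
  with Qs show ?thesis by (metis add_0_right le0)
qed

text \<open>Otherwise the parent B of Q lies in a cube of generation m, which by disjointness
  is P; then \<open>B \<subseteq> P \<subseteq> Q\<close> contradicts \<open>diameter Q \<le> diameter B / 3\<close>.\<close>
lemma gen_le_of_subset:
  assumes cc: "cantor_construction Q0 ch c"
    and P: "P \<in> gen Q0 ch m" and Q: "Q \<in> gen Q0 ch k" and PQ: "P \<subseteq> Q"
  shows "m \<ge> k"
proof (rule ccontr)
  assume "\<not> m \<ge> k"
  then obtain k' where k': "k = Suc k'" "m \<le> k'" by (cases k) auto
  then obtain B where B: "B \<in> gen Q0 ch k'" "Q \<in> ch B" using Q by auto
  have "B \<in> gen Q0 ch (m + (k' - m))" using B(1) k'(2) by simp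
  then obtain A where A: "A \<in> gen Q0 ch m" "B \<subseteq> A" using gen_ancestor[OF cc] by blast
  have B_cube: "B \<in> cubes Q0 ch" using B(1) gen_subset_cubes by blast
  have QB: "Q \<subseteq> B" and diam_Q: "diameter Q \<le> diameter B / 3"
    using cantor_child[OF cc B_cube B(2)] by blast+
  have "P \<noteq> {}" using gen_cube(3)[OF cc P] by auto
  with PQ QB A(2) have "A \<inter> P \<noteq> {}" by blast
  then have "A = P" using gen_disjoint[OF cc A(1) P] by blast
  with A(2) PQ have "B \<subseteq> Q" by blast
  then have "diameter B \<le> diameter Q" using diameter_subset gen_cube(2)[OF cc Q] by blast
  with diam_Q gen_cube(3)[OF cc B(1)] show False by linarith
qed

lemma subcube_gen_offset:
  assumes cc: "cantor_construction Q0 ch c"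
    and P: "P \<in> cubes Q0 ch" and Q: "Q \<in> gen Q0 ch k" and PQ: "P \<subseteq> Q"
  shows "\<exists>n. P \<in> gen Q0 ch (k + n)"
proof -
  obtain m where "P \<in> gen Q0 ch m" using P unfolding cubes_def by blast
  moreover from gen_le_of_subset[OF cc this Q PQ] have "m = k + (m - k)" by simp
  ultimately show ?thesis by metis
qed

lemma Theta_le_of_nondoubling_chain:
  assumes cc: "cantor_construction Q0 ch c"
    and chain: "\<forall>(n::nat) Qs. Qs 0 \<in> cubes Q0 ch \<and>
       (\<forall>j\<in>{1..n}. Qs j \<in> ch (Qs (j - 1)) \<and> \<not> p_doubling Q0 ch \<mu> s c_db (Qs j))
       \<longrightarrow> (\<forall>j\<le>n. Theta \<mu> s (Qs j) \<le> 2 powr (- real j / 2) * pcoef Q0 ch \<mu> s (Qs 0))"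
    and Q: "Q \<in> gen Q0 ch k" and P: "P \<in> gen Q0 ch (k + n)" and PQ: "P \<subseteq> Q"
    and nondoubling: "\<forall>P'\<in>cubes Q0 ch. P \<subseteq> P' \<and> P' \<subseteq> Q \<longrightarrow> \<not> p_doubling Q0 ch \<mu> s c_db P'"
  shows "Theta \<mu> s P \<le> 2 powr (- real n / 2) * pcoef Q0 ch \<mu> s Q"
proof -
  obtain Qs where Qs: "Qs n = P" "\<forall>j\<le>n. Qs j \<in> gen Q0 ch (k + j)" "\<forall>j\<in>{1..n}. Qs j \<in> ch (Qs (j - 1))"
    using gen_ancestor_chain[OF P] by blast
  have cubes: "\<forall>j\<le>n. Qs j \<in> cubes Q0 ch" using Qs(2) gen_subset_cubes by blast
  have between: "P \<subseteq> Qs j" "Qs j \<subseteq> Qs 0" if "j \<le> n" for j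
    using child_chain_antimono[OF cc cubes Qs(3)] that Qs(1) by auto
  have "Qs 0 \<in> gen Q0 ch k" using Qs(2) by force
  moreover have "P \<noteq> {}" using gen_cube(3)[OF cc P] by auto
  with between(1)[of 0] PQ have "Qs 0 \<inter> Q \<noteq> {}" by blast
  ultimately have Q_eq: "Qs 0 = Q" using gen_disjoint[OF cc _ Q] by blast
  have "\<forall>j\<in>{1..n}. Qs j \<in> ch (Qs (j - 1)) \<and> \<not> p_doubling Q0 ch \<mu> s c_db (Qs j)"
    using nondoubling between cubes Qs(3) Q_eq by auto
  then have "\<forall>j\<le>n. Theta \<mu> s (Qs j) \<le> 2 powr (- real j / 2) * pcoef Q0 ch \<mu> s (Qs 0)"
    using chain cubes by blast
  then show ?thesis using Q_eq Qs(1) by auto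
qed

lemma sum_measure_disjoint_le:
  assumes "finite_measure M" "finite S" "S \<subseteq> sets M" "Q \<in> sets M"
    and "\<forall>P\<in>S. P \<subseteq> Q" and "pairwise disjnt S"
  shows "(\<Sum>P\<in>S. measure M P) \<le> measure M Q"
proof -
  interpret finite_measure M by fact
  have "(\<Sum>P\<in>S. measure M P) = measure M (\<Union>S)"
    using assms(2,3,6) by (intro measure_Union'[symmetric]) (auto simp: fmeasurable_eq_sets)
  also have "\<dots> \<le> measure M Q"
    using assms(3-5) by (intro finite_measure_mono) auto
  finally show ?thesis .
qed

lemma sum_measure_gen_le:
  assumes cc: "cantor_construction Q0 ch c" and "finite_measure \<mu>" and borel: "sets \<mu> = sets borel"
    and "finite S" and S: "S \<subseteq> gen Q0 ch k" and Q: "Q \<in> cubes Q0 ch" and "\<forall>P\<in>S. P \<subseteq> Q"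
  shows "(\<Sum>P\<in>S. measure \<mu> P) \<le> measure \<mu> Q"
proof (rule sum_measure_disjoint_le)
  have "P \<in> sets \<mu>" if "P \<in> cubes Q0 ch" for P
    using that gen_cube(1)[OF cc] borel unfolding cubes_def by auto
  then show "S \<subseteq> sets \<mu>" "Q \<in> sets \<mu>" using S Q gen_subset_cubes by blast+
  show "pairwise disjnt S"
    using S gen_disjoint[OF cc] unfolding pairwise_def disjnt_def by blast
qed fact+

lemma sum_le_geometric_levels:
  fixes f m :: "'a \<Rightarrow> real" and lvl :: "'a \<Rightarrow> nat"
  assumes F: "finite F" and f_le: "\<forall>x\<in>F. f x \<le> (1/2) ^ lvl x * m x"
    and level_le: "\<And>n. (\<Sum>x\<in>{x\<in>F. lvl x = n}. m x) \<le> M" and "0 \<le> M"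
  shows "(\<Sum>x\<in>F. f x) \<le> 2 * M"
proof -
  have "(\<Sum>x\<in>F. f x) \<le> (\<Sum>x\<in>F. (1/2) ^ lvl x * m x)"
    using f_le by (intro sum_mono) auto
  also have "\<dots> = (\<Sum>n\<in>lvl ` F. \<Sum>x\<in>{x\<in>F. lvl x = n}. (1/2) ^ lvl x * m x)"
    by (rule sum.group[symmetric]) (use F in auto)
  also have "\<dots> = (\<Sum>n\<in>lvl ` F. (1/2) ^ n * (\<Sum>x\<in>{x\<in>F. lvl x = n}. m x))"
    by (simp add: sum_distrib_left)
  also have "\<dots> \<le> (\<Sum>n\<in>lvl ` F. (1/2) ^ n) * M"
    unfolding sum_distrib_right by (intro sum_mono mult_left_mono level_le) auto
  also have "(\<Sum>n\<in>lvl ` F. (1/2::real) ^ n) \<le> (\<Sum>n. (1/2) ^ n)"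
    using F by (intro sum_le_suminf) auto
  then have "(\<Sum>n\<in>lvl ` F. (1/2::real) ^ n) * M \<le> 2 * M"
    using \<open>0 \<le> M\<close> by (simp add: suminf_geometric mult_right_mono)
  finally show ?thesis .
qed

lemma square_le_of_le_powr_neg_half:
  fixes t p :: real
  assumes "0 \<le> t" "t \<le> 2 powr (- real n / 2) * p"
  shows "t\<^sup>2 \<le> (1/2) ^ n * p\<^sup>2"
proof -
  have "t\<^sup>2 \<le> (2 powr (- real n / 2) * p)\<^sup>2" using power_mono[OF assms(2,1)] .
  also have "\<dots> = 2 powr (- real n) * p\<^sup>2"
    by (simp add: power_mult_distrib power2_eq_square powr_add[symmetric])
  also have "2 powr (- real n) = (1/2::real) ^ n"
    by (simp add: powr_minus powr_realpow power_divide inverse_eq_divide)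
  finally show ?thesis .
qed

lemma infsum_ennreal_le_of_finite_sums:
  fixes f :: "'a \<Rightarrow> real"
  assumes "\<And>F. finite F \<Longrightarrow> F \<subseteq> A \<Longrightarrow> (\<Sum>x\<in>F. f x) \<le> C" and "\<forall>x\<in>A. 0 \<le> f x"
  shows "(\<Sum>\<^sub>\<infinity>x\<in>A. ennreal (f x)) \<le> ennreal C"
proof (rule infsum_le_finite_sums)
  show "(\<lambda>x. ennreal (f x)) summable_on A" by (rule nonneg_summable_on_complete) simp
  fix F assume "finite F" "F \<subseteq> A"
  with assms show "(\<Sum>x\<in>F. ennreal (f x)) \<le> ennreal C"
    by (subst sum_ennreal) (auto intro!: ennreal_leI)
qed

theorem lemma2p2:
  fixes Q0 :: "(real ^ 'd) set"
    and ch :: "(real ^ 'd) set \<Rightarrow> (real ^ 'd) set set"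
    and c_sep s c_db :: real
    and \<mu> :: "(real ^ 'd) measure"
    and Q :: "(real ^ 'd) set"
    and J :: "(real ^ 'd) set set"
  assumes s_pos: "0 < s" and s_lt_d: "s < real CARD('d)"
    and constr: "cantor_construction Q0 ch c_sep"
    and borel: "sets \<mu> = sets borel"
    and finite: "finite_measure \<mu>"
    and supp: "emeasure \<mu> (UNIV - cantor_set Q0 ch) = 0"
    and pos: "\<forall>P\<in>cubes Q0 ch. emeasure \<mu> P > 0"
    and chain: "\<forall>(n::nat) (Qs :: nat \<Rightarrow> (real ^ 'd) set).
       Qs 0 \<in> cubes Q0 ch \<and>
       (\<forall>j\<in>{1..n}. Qs j \<in> ch (Qs (j - 1)) \<and> \<not> p_doubling Q0 ch \<mu> s c_db (Qs j))
       \<longrightarrow> (\<forall>j\<le>n. Theta \<mu> s (Qs j) \<le> 2 powr (- real j / 2) * pcoef Q0 ch \<mu> s (Qs 0))"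
    and Q: "Q \<in> cubes Q0 ch"
    and J_sub: "J \<subseteq> cubes Q0 ch"
    and J_in_Q: "\<forall>P\<in>J. P \<subseteq> Q"
    and J_nd: "\<forall>P\<in>J. \<forall>P'\<in>cubes Q0 ch. P \<subseteq> P' \<and> P' \<subseteq> Q \<longrightarrow> \<not> p_doubling Q0 ch \<mu> s c_db P'"
  shows "sigma \<mu> s J \<le> ennreal (2 * (pcoef Q0 ch \<mu> s Q)\<^sup>2 * measure \<mu> Q)"
proof -
  define pQ where "pQ = pcoef Q0 ch \<mu> s Q"
  obtain k where Qk: "Q \<in> gen Q0 ch k" using Q unfolding cubes_def by blast
  have "\<forall>P\<in>J. \<exists>n. P \<in> gen Q0 ch (k + n)"
    using subcube_gen_offset[OF constr _ Qk] J_sub J_in_Q by blast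
  then obtain depth where depth: "\<forall>P\<in>J. P \<in> gen Q0 ch (k + depth P)" by metis
  have Theta_sq_le: "(Theta \<mu> s P)\<^sup>2 * measure \<mu> P \<le> (1/2) ^ depth P * (pQ\<^sup>2 * measure \<mu> P)"
    if "P \<in> J" for P
  proof -
    have "Theta \<mu> s P \<le> 2 powr (- real (depth P) / 2) * pQ" unfolding pQ_def
      using Theta_le_of_nondoubling_chain[OF constr chain Qk] depth J_in_Q J_nd that by blast
    then have "(Theta \<mu> s P)\<^sup>2 \<le> (1/2) ^ depth P * pQ\<^sup>2"
      by (intro square_le_of_le_powr_neg_half) (simp_all add: Theta_def)
    then show ?thesis by (simp add: mult.assoc[symmetric] mult_right_mono)
  qed
  have "(\<Sum>P\<in>F. (Theta \<mu> s P)\<^sup>2 * measure \<mu> P) \<le> 2 * (pQ\<^sup>2 * measure \<mu> Q)"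
    if "finite F" "F \<subseteq> J" for F
  proof (rule sum_le_geometric_levels[OF \<open>finite F\<close>])
    fix n
    have "(\<Sum>P\<in>{P\<in>F. depth P = n}. measure \<mu> P) \<le> measure \<mu> Q"
      using that depth J_in_Q by (intro sum_measure_gen_le[OF constr finite borel _ _ Q, where k = "k + n"]) auto
    then show "(\<Sum>P\<in>{P\<in>F. depth P = n}. pQ\<^sup>2 * measure \<mu> P) \<le> pQ\<^sup>2 * measure \<mu> Q"
      by (simp add: sum_distrib_left[symmetric] mult_left_mono)
  qed (use that Theta_sq_le in auto)
  then show ?thesis unfolding sigma_def pQ_def
    by (intro infsum_ennreal_le_of_finite_sums) (auto simp: mult.assoc)
qed

end
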